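(* Let $N_q\ge 1$ and let $\{s_{t,j}\}$, $1\le t\le N_q$, $1\le j\le n$, be real numbers. For each $j$ define $a_j := \max_{1\le t\le N_q} s_{t,j}$ and $g_j := \log\sum_{t=1}^{N_q}\exp(s_{t,j})$. Let $a_{(1)}\ge a_{(2)}\ge \dots \ge a_{(n)}$ be the values $\{a_j\}$ sorted in non-increasing order, and let $1\le K<n$. If $a_{(K)} - a_{(K+1)} > \log N_q$, then the set of $K$ indices $j$ with the largest values of $a_j$ is identical to the set of $K$ indices $j$ with the largest values of $g_j$.
   Context: In the paper's setting, $s_{t,j}$ is the cosine similarity between query-token hidden state $h_t$ and visual token embedding $v_j$; $a_j$ is the max-similarity pruning score and $g_j$ the log-sum-exp (smooth attention-style pooling) score of visual token $j$. *)

theory Defs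
  imports Complex_Main
begin

definition max_score :: "nat \<Rightarrow> (nat \<Rightarrow> nat \<Rightarrow> real) \<Rightarrow> nat \<Rightarrow> real" where
  "max_score Nq s j = Max ((\<lambda>t. s t j) ` {1..Nq})"

definition lse_score :: "nat \<Rightarrow> (nat \<Rightarrow> nat \<Rightarrow> real) \<Rightarrow> nat \<Rightarrow> real" where
  "lse_score Nq s j = ln (\<Sum>t=1..Nq. exp (s t j))"

text \<open>k-th largest value (1-based) of f over the indices 1..n: f_(k).\<close>
definition order_stat :: "(nat \<Rightarrow> real) \<Rightarrow> nat \<Rightarrow> nat \<Rightarrow> real" where
  "order_stat f n k = rev (sort (map f [1..<n+1])) ! (k - 1)"

definition is_topK :: "(nat \<Rightarrow> real) \<Rightarrow> nat \<Rightarrow> nat \<Rightarrow> nat set \<Rightarrow> bool" where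
  "is_topK f n K T \<longleftrightarrow> T \<subseteq> {1..n} \<and> card T = K \<and>
     (\<forall>i\<in>T. \<forall>j\<in>{1..n} - T. f j \<le> f i)"

end

theory Submission
  imports Defs "HOL-Library.Multiset"
begin

text \<open>
  Log-sum-exp exceeds the maximum by at most the logarithm of the number of terms, so
  \<open>a j \<le> g j \<le> a j + ln Nq\<close>. Let \<open>T\<close> be the set of indices with \<open>a j \<ge> a_(K)\<close>.
  Because of the gap it has exactly \<open>K\<close> elements, and every index outside it has
  \<open>a j \<le> a_(K+1)\<close>. Hence \<open>g j \<le> a j + ln Nq < a i \<le> g i\<close> for \<open>i \<in> T\<close> and \<open>j \<notin> T\<close>,
  and a \<open>K\<close>-set that strictly separates the scores is the unique top-\<open>K\<close> set, for
  \<open>a\<close> as well as for \<open>g\<close>.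
\<close>

lemma Max_le_ln_sum_exp:
  fixes f :: "'a \<Rightarrow> real"
  assumes "finite A" "A \<noteq> {}"
  shows "Max (f ` A) \<le> ln (\<Sum>x\<in>A. exp (f x))"
proof -
  have "Max (f ` A) \<in> f ` A"
    using assms by simp
  then obtain x0 where x0: "x0 \<in> A" "Max (f ` A) = f x0"
    by auto
  have "exp (f x0) \<le> (\<Sum>x\<in>A. exp (f x))"
    using assms x0 by (intro member_le_sum) auto
  moreover have "0 < (\<Sum>x\<in>A. exp (f x))"
    using assms by (intro sum_pos) auto
  ultimately show ?thesis
    using x0 by (simp add: ln_ge_iff)
qed

lemma ln_sum_exp_le_Max:
  fixes f :: "'a \<Rightarrow> real"
  assumes "finite A" "A \<noteq> {}"
  shows "ln (\<Sum>x\<in>A. exp (f x)) \<le> Max (f ` A) + ln (card A)"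
proof -
  have "(\<Sum>x\<in>A. exp (f x)) \<le> (\<Sum>x\<in>A. exp (Max (f ` A)))"
    using assms by (intro sum_mono) auto
  also have "\<dots> = exp (Max (f ` A) + ln (card A))"
    using assms by (simp add: exp_add card_gt_0_iff)
  finally have "(\<Sum>x\<in>A. exp (f x)) \<le> exp (Max (f ` A) + ln (card A))" .
  moreover have "0 < (\<Sum>x\<in>A. exp (f x))"
    using assms by (intro sum_pos) auto
  ultimately show ?thesis
    by (metis exp_gt_zero ln_exp ln_le_cancel_iff)
qed

lemma lse_score_less_if_max_score_gap:
  assumes "Nq \<ge> 1" and gap: "max_score Nq s j + ln (real Nq) < max_score Nq s i"
  shows "lse_score Nq s j < lse_score Nq s i"
proof -
  have ne: "{1..Nq} \<noteq> {}" using assms(1) by simp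
  have "lse_score Nq s j \<le> max_score Nq s j + ln (real Nq)"
    using ln_sum_exp_le_Max[OF _ ne, of "\<lambda>t. s t j"]
    unfolding lse_score_def max_score_def by simp
  also have "\<dots> < max_score Nq s i" by (rule gap)
  also have "\<dots> \<le> lse_score Nq s i"
    using Max_le_ln_sum_exp[OF _ ne, of "\<lambda>t. s t i"]
    unfolding lse_score_def max_score_def by simp
  finally show ?thesis .
qed

lemma filter_ge_nth_sorted_desc:
  fixes xs :: "'a::linorder list"
  assumes sorted: "sorted (rev xs)" and "0 < k" "k < length xs"
    and gap: "xs ! k < xs ! (k - 1)"
  shows "filter (\<lambda>y. xs ! (k - 1) \<le> y) xs = take k xs"
proof -
  have head: "xs ! (k - 1) \<le> y" if y: "y \<in> set (take k xs)" for y
  proof -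
    obtain i where "i < length (take k xs)" "y = take k xs ! i"
      using y by (auto simp: in_set_conv_nth)
    then have "i < k" "y = xs ! i"
      by simp_all
    then show ?thesis
      using sorted_rev_nth_mono[OF sorted] assms(3) by simp
  qed
  have tail: "y < xs ! (k - 1)" if y: "y \<in> set (drop k xs)" for y
  proof -
    obtain i where "i < length xs - k" "y = xs ! (k + i)"
      using y by (auto simp: in_set_conv_nth)
    then have "y \<le> xs ! k"
      using sorted_rev_nth_mono[OF sorted] by simp
    then show ?thesis
      using gap by simp
  qed
  have "filter (\<lambda>y. xs ! (k - 1) \<le> y) (take k xs @ drop k xs) = take k xs"
    unfolding filter_append using head tail
    by (simp add: filter_id_conv filter_empty_conv not_le)
  then show ?thesis
    by simp
qed

lemma length_filter_rev_sort: "length (filter P (rev (sort xs))) = length (filter P xs)"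
  by (metis mset_filter mset_rev mset_sort size_mset)

lemma card_upper_set_order_stat:
  fixes f :: "nat \<Rightarrow> real"
  assumes "1 \<le> K" "K < n" and gap: "order_stat f n (K + 1) < order_stat f n K"
  shows "card {j \<in> {1..n}. order_stat f n K \<le> f j} = K"
proof -
  define xs where "xs = rev (sort (map f [1..<n+1]))"
  have sorted: "sorted (rev xs)" and len: "length xs = n"
    by (simp_all add: xs_def)
  have L: "order_stat f n K = xs ! (K - 1)" and R: "order_stat f n (K + 1) = xs ! K"
    unfolding order_stat_def xs_def by simp_all
  have "card {j \<in> {1..n}. order_stat f n K \<le> f j}
      = length (filter (\<lambda>j. order_stat f n K \<le> f j) [1..<n+1])"
    by (subst distinct_card[symmetric]) (auto intro: arg_cong[where f = card])
  also have "\<dots> = length (filter (\<lambda>y. xs ! (K - 1) \<le> y) xs)"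
    unfolding L xs_def length_filter_rev_sort by (simp only: filter_map length_map comp_def)
  also have "\<dots> = K"
    using filter_ge_nth_sorted_desc[OF sorted _ _ gap[unfolded L R]] assms(1,2) len by simp
  finally show ?thesis .
qed

lemma le_order_stat_Suc_if_less_order_stat:
  fixes f :: "nat \<Rightarrow> real"
  assumes "1 \<le> K" "K < n" "j \<in> {1..n}" and less: "f j < order_stat f n K"
  shows "f j \<le> order_stat f n (K + 1)"
proof -
  define xs where "xs = rev (sort (map f [1..<n+1]))"
  have sorted: "sorted (rev xs)" and len: "length xs = n"
    by (simp_all add: xs_def)
  have L: "order_stat f n K = xs ! (K - 1)" and R: "order_stat f n (K + 1) = xs ! K"
    unfolding order_stat_def xs_def by simp_all
  have "j \<in> set [1..<n+1]"
    using assms(3) by auto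
  then have "f j \<in> set xs"
    unfolding xs_def set_rev set_sort set_map by (rule imageI)
  then obtain i where i: "i < n" "xs ! i = f j"
    using len by (auto simp: in_set_conv_nth)
  have "K \<le> i"
  proof (rule ccontr)
    assume "\<not> K \<le> i"
    then have "xs ! (K - 1) \<le> xs ! i"
      using sorted_rev_nth_mono[OF sorted] assms(2) len by simp
    then show False
      using less i L by simp
  qed
  then show ?thesis
    using sorted_rev_nth_mono[OF sorted] i assms(2) len R by force
qed

lemma is_topK_iff_eq_separating_set:
  fixes f :: "nat \<Rightarrow> real"
  assumes T0: "T0 \<subseteq> {1..n}" "card T0 = K"
    and separates: "\<And>i j. i \<in> T0 \<Longrightarrow> j \<in> {1..n} - T0 \<Longrightarrow> f j < f i"
  shows "is_topK f n K T \<longleftrightarrow> T = T0"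
proof
  assume topK: "is_topK f n K T"
  have fin: "finite T" "finite T0"
    using topK T0 unfolding is_topK_def by (auto intro: finite_subset)
  show "T = T0"
  proof (rule ccontr)
    assume "T \<noteq> T0"
    then have "\<not> T0 \<subseteq> T" "\<not> T \<subseteq> T0"
      using fin topK T0 unfolding is_topK_def by (metis card_subset_eq)+
    then obtain i j where "i \<in> T0" "i \<notin> T" "j \<in> T" "j \<notin> T0"
      by auto
    with topK T0 separates[of i j] show False
      unfolding is_topK_def by force
  qed
next
  assume "T = T0"
  then show "is_topK f n K T"
    using T0 separates unfolding is_topK_def by (auto intro: less_imp_le)
qed

theorem corollaryA2:
  fixes s :: "nat \<Rightarrow> nat \<Rightarrow> real" and Nq n K :: nat
  assumes "Nq \<ge> 1" and "1 \<le> K" and "K < n"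
    and "order_stat (max_score Nq s) n K - order_stat (max_score Nq s) n (K + 1) > ln (real Nq)"
  shows "(\<exists>!T. is_topK (max_score Nq s) n K T) \<and>
         (\<exists>!T. is_topK (lse_score Nq s) n K T) \<and>
         (\<forall>T. is_topK (max_score Nq s) n K T \<longleftrightarrow> is_topK (lse_score Nq s) n K T)"
proof -
  let ?a = "max_score Nq s"
  define L where "L = order_stat ?a n K"
  define R where "R = order_stat ?a n (K + 1)"
  define T0 where "T0 = {j \<in> {1..n}. L \<le> ?a j}"
  have ln_nonneg: "0 \<le> ln (real Nq)"
    using assms(1) by simp
  have gap: "R + ln (real Nq) < L"
    using assms(4) unfolding L_def R_def by simp
  have T0: "T0 \<subseteq> {1..n}" "card T0 = K"
    using card_upper_set_order_stat[OF assms(2,3)] gap ln_nonneg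
    unfolding T0_def L_def R_def by auto
  have outside: "?a j \<le> R" if "j \<in> {1..n} - T0" for j
    using le_order_stat_Suc_if_less_order_stat[OF assms(2,3)] that
    unfolding T0_def L_def R_def by force
  have separates: "?a j + ln (real Nq) < ?a i" if "i \<in> T0" "j \<in> {1..n} - T0" for i j
    using outside[OF that(2)] gap that(1) unfolding T0_def by force
  have "is_topK ?a n K T \<longleftrightarrow> T = T0" for T
    using separates ln_nonneg by (intro is_topK_iff_eq_separating_set[OF T0]) fastforce
  moreover have "is_topK (lse_score Nq s) n K T \<longleftrightarrow> T = T0" for T
    using separates lse_score_less_if_max_score_gap[OF assms(1)]
    by (intro is_topK_iff_eq_separating_set[OF T0]) blast
  ultimately show ?thesis
    by auto
qed

end
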